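(* For each $n\ge0$ there is an exact sequence of $k$-modules \[0\leftarrow k\xleftarrow{\varepsilon}k\bigl[\mathrm{Hom}_{\mathcal{IF}(as)}([n],[0])\bigr]\xleftarrow{\rho}k\bigl[\mathrm{Hom}_{\mathcal{IF}(as)}([n],[2])\bigr],\] where $\varepsilon(f)=1_k$ on generators and $\rho(g)=\mu_2\circ g-\nu\circ g$ on generators, both extended $k$-linearly.
   Context: Let $k$ be a commutative ring and $C_2=\{1,t\}$. The category $\mathcal{IF}(as)$ of involutive non-commutative sets: objects $[n]=\{0,\dots,n\}$, $n\ge0$; a morphism $f:[n]\to[m]$ is a map of sets together with a total order on each fibre $f^{-1}(i)$ and a $C_2$-label on each element of $[n]$ (so each fibre is a $C_2$-labelled ordered set). For a $C_2$-labelled ordered set $S$, $S^t$ denotes $S$ with the order reversed and all labels multiplied by $t$. The composite $g\circ f$ of $f:[n]\to[m]$ and $g:[m]\to[l]$ has the composite underlying map and, for $i\in[l]$ with $g^{-1}(i)=\{j_1<\dots<j_r\}$, fibre the concatenation $S_1<\dots<S_r$ where $S_s=f^{-1}(j_s)$ if $j_s$ has label $1$ and $S_s=f^{-1}(j_s)^t$ if $j_s$ has label $t$. For $n\ge0$, $\mu_n:[n]\to[0]$ is given by $\mu_n^{-1}(0)=\{0^1<1^1<\dots<n^1\}$ (superscripts are labels), and $\nu:[2]\to[0]$ is given by $\nu^{-1}(0)=\{2^1<1^t<0^1\}$. $k[S]$ denotes the free $k$-module on a set $S$. *)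

theory Defs
  imports Main
begin

datatype c2 = C1 | Ct

fun c2_mult :: "c2 \<Rightarrow> c2 \<Rightarrow> c2" where
  "c2_mult C1 b = b"
| "c2_mult Ct C1 = Ct"
| "c2_mult Ct Ct = C1"

text \<open>A C_2-labelled ordered set is a list of pairs (element, label), listed in
increasing order.  A morphism f : [n] -> [m] is encoded by the list of its m+1
fibres f^{-1}(0), ..., f^{-1}(m), each a C_2-labelled ordered set; these
fibres together contain each element of [n] = {0,...,n} exactly once.\<close>

type_synonym lset = "(nat \<times> c2) list"
type_synonym ifmor = "lset list"

definition IF_hom :: "nat \<Rightarrow> nat \<Rightarrow> ifmor set" where
  "IF_hom n m = {F. length F = Suc m \<and> distinct (map fst (concat F))
                    \<and> set (map fst (concat F)) = {0..n}}"

definition twist :: "lset \<Rightarrow> lset" where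
  "twist S = rev (map (\<lambda>(x, l). (x, c2_mult Ct l)) S)"

text \<open>Composite g o f, for f : [n] -> [m] and g : [m] -> [l]: the fibre over i is
the concatenation, along the fibre g^{-1}(i) = {j_1 < ... < j_r}, of f^{-1}(j_s)
(label of j_s equal to 1) or f^{-1}(j_s)^t (label of j_s equal to t).\<close>
definition IF_comp :: "ifmor \<Rightarrow> ifmor \<Rightarrow> ifmor" where
  "IF_comp g f = map (\<lambda>S. concat (map (\<lambda>(j, l). if l = C1 then f ! j else twist (f ! j)) S)) g"

definition mu :: "nat \<Rightarrow> ifmor" where
  "mu n = [map (\<lambda>i. (i, C1)) [0..<Suc n]]"

definition nu :: ifmor where
  "nu = [[(2, C1), (1, Ct), (0, C1)]]"

text \<open>k[S]: functions S -> k vanishing outside S (the Hom-sets are finite).\<close>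
definition free_mod :: "'a set \<Rightarrow> ('a \<Rightarrow> 'k::comm_ring_1) set" where
  "free_mod S = {x. finite {a. x a \<noteq> 0} \<and> (\<forall>a. a \<notin> S \<longrightarrow> x a = 0)}"

definition gen :: "'a \<Rightarrow> 'a \<Rightarrow> 'k::comm_ring_1" where
  "gen a = (\<lambda>b. if b = a then 1 else 0)"

definition eps_map :: "nat \<Rightarrow> (ifmor \<Rightarrow> 'k::comm_ring_1) \<Rightarrow> 'k" where
  "eps_map n x = (\<Sum>f\<in>IF_hom n 0. x f * 1)"

definition rho_map :: "nat \<Rightarrow> (ifmor \<Rightarrow> 'k::comm_ring_1) \<Rightarrow> (ifmor \<Rightarrow> 'k)" where
  "rho_map n y = (\<lambda>h. \<Sum>g\<in>IF_hom n 2. y g * (gen (IF_comp (mu 2) g) h - gen (IF_comp nu g) h))"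

end

theory Submission
  imports Defs "HOL-Library.Multiset"
begin

text \<open>Epsilon is split by the generator mu_n, and rho sends a generator g to the difference of the
  two generators mu_2 o g and nu o g, so epsilon o rho = 0.  A morphism [n] -> [0] is a single
  C_2-labelled ordering w of {0, ..., n}; for g = (A | B | C) : [n] -> [2] the two composites are
  ABC and C B^t A.  Since the kernel of epsilon is spanned by the differences w - mu_n, exactness
  amounts to the moves ABC ~ C B^t A connecting every labelled ordering with mu_n.  Moves contain
  the rotations, hence the twist of any block inside a word, in particular relabelling a single
  letter and transposing two adjacent ones; with these, every word is bubble-sorted into mu_n.\<close>

definition labelled_orders :: "nat \<Rightarrow> lset set" where
  "labelled_orders n = {w. distinct (map fst w) \<and> set (map fst w) = {0..n}}"

lemma labelled_orders_mset_cong: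
  "w \<in> labelled_orders n \<Longrightarrow> mset (map fst w') = mset (map fst w) \<Longrightarrow> w' \<in> labelled_orders n"
  unfolding labelled_orders_def by (metis mem_Collect_eq mset_eq_imp_distinct_iff mset_eq_setD)

definition canonical_order :: "nat \<Rightarrow> lset" where
  "canonical_order n = map (\<lambda>i. (i, C1)) [0..<Suc n]"

lemma canonical_order_in_labelled_orders: "canonical_order n \<in> labelled_orders n"
  unfolding canonical_order_def labelled_orders_def
  by (simp del: upt_Suc add: comp_def image_image atLeastLessThanSuc_atLeastAtMost)

lemma map_fst_twist [simp]: "map fst (twist X) = rev (map fst X)"
  unfolding twist_def by (induction X) auto

lemma twist_Nil [simp]: "twist [] = []"
  by (simp add: twist_def)

definition move :: "nat \<Rightarrow> lset \<Rightarrow> lset \<Rightarrow> bool" where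
  "move n w w' \<longleftrightarrow> w \<in> labelled_orders n \<and> (\<exists>A B C. w = A @ B @ C \<and> w' = C @ twist B @ A)"

lemma move_rotate: "A @ C \<in> labelled_orders n \<Longrightarrow> move n (A @ C) (C @ A)"
  unfolding move_def by (metis append_Nil twist_Nil)

lemma equivclp_move_twist_prefix:
  assumes "B @ C \<in> labelled_orders n"
  shows "equivclp (move n) (B @ C) (twist B @ C)"
proof -
  have "move n (B @ C) (C @ twist B)"
    using assms unfolding move_def by (metis append_Nil append_Nil2)
  moreover have "move n (C @ twist B) (twist B @ C)"
    by (rule move_rotate, rule labelled_orders_mset_cong[OF assms]) auto
  ultimately show ?thesis by (meson equivclp_trans r_into_equivclp)
qed

lemma equivclp_move_twist:
  assumes "u @ X @ v \<in> labelled_orders n"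
  shows "equivclp (move n) (u @ X @ v) (u @ twist X @ v)"
proof -
  have twisted: "u @ twist X @ v \<in> labelled_orders n"
    by (rule labelled_orders_mset_cong[OF assms]) auto
  have "move n (u @ X @ v) (X @ v @ u)"
    using move_rotate[of u "X @ v"] assms by simp
  moreover have "equivclp (move n) (X @ v @ u) (twist X @ v @ u)"
    by (rule equivclp_move_twist_prefix, rule labelled_orders_mset_cong[OF assms]) auto
  moreover have "move n (u @ twist X @ v) (twist X @ v @ u)"
    using move_rotate[of u "twist X @ v"] twisted by simp
  ultimately show ?thesis by (meson equivclp_trans r_into_equivclp converse_r_into_equivclp)
qed

definition interchangeable :: "nat \<Rightarrow> lset \<Rightarrow> lset \<Rightarrow> bool" where
  "interchangeable n xs ys \<longleftrightarrow> mset (map fst xs) = mset (map fst ys) \<and>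
     (\<forall>u v. u @ xs @ v \<in> labelled_orders n \<longrightarrow> equivclp (move n) (u @ xs @ v) (u @ ys @ v))"

lemma interchangeable_refl: "interchangeable n xs xs"
  unfolding interchangeable_def by simp

lemma interchangeable_trans [trans]:
  assumes "interchangeable n xs ys" "interchangeable n ys zs"
  shows "interchangeable n xs zs"
  unfolding interchangeable_def
proof (intro conjI allI impI)
  show "mset (map fst xs) = mset (map fst zs)"
    using assms unfolding interchangeable_def by simp
  fix u v assume uxv: "u @ xs @ v \<in> labelled_orders n"
  have "u @ ys @ v \<in> labelled_orders n"
    using labelled_orders_mset_cong[OF uxv] assms unfolding interchangeable_def by simp
  then show "equivclp (move n) (u @ xs @ v) (u @ zs @ v)"
    using uxv assms unfolding interchangeable_def by (meson equivclp_trans)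
qed

lemma interchangeable_append:
  assumes "interchangeable n xs ys"
  shows "interchangeable n (p @ xs @ q) (p @ ys @ q)"
  unfolding interchangeable_def
proof (intro conjI allI impI)
  show "mset (map fst (p @ xs @ q)) = mset (map fst (p @ ys @ q))"
    using assms unfolding interchangeable_def by simp
  fix u v assume "u @ (p @ xs @ q) @ v \<in> labelled_orders n"
  then show "equivclp (move n) (u @ (p @ xs @ q) @ v) (u @ (p @ ys @ q) @ v)"
    using assms unfolding interchangeable_def
    by (metis append.assoc)
qed

lemma interchangeable_twist: "interchangeable n X (twist X)"
  unfolding interchangeable_def using equivclp_move_twist by simp

lemma interchangeable_relabel: "interchangeable n [(x, l)] [(x, l')]"
proof (cases "l = l'")
  case True
  then show ?thesis by (simp add: interchangeable_refl)
next
  case False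
  then have "l' = c2_mult Ct l" by (cases l; cases l') auto
  then show ?thesis using interchangeable_twist[of n "[(x, l)]"] by (simp add: twist_def)
qed

lemma interchangeable_swap: "interchangeable n [a, b] [b, a]"
proof -
  obtain x l y m where ab: "a = (x, l)" "b = (y, m)" by fastforce
  have "interchangeable n [a, b] [(y, c2_mult Ct m), (x, c2_mult Ct l)]"
    using interchangeable_twist[of n "[a, b]"] by (simp add: twist_def ab)
  also have "interchangeable n \<dots> [(y, m), (x, c2_mult Ct l)]"
    using interchangeable_append[OF interchangeable_relabel, where p="[]" and q="[(x, c2_mult Ct l)]"]
    by simp
  also have "interchangeable n \<dots> [b, a]"
    using interchangeable_append[OF interchangeable_relabel, where p="[(y, m)]" and q="[]"] ab
    by simp
  finally show ?thesis .
qed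

lemma interchangeable_insort:
  "interchangeable n ((a, l) # map (\<lambda>i. (i, C1)) zs) (map (\<lambda>i. (i, C1)) (insort a zs))"
proof (induction zs)
  case Nil
  then show ?case by (simp add: interchangeable_relabel)
next
  case (Cons z zs)
  show ?case
  proof (cases "a \<le> z")
    case True
    then show ?thesis
      using interchangeable_append[OF interchangeable_relabel, where p="[]"] by simp
  next
    case False
    have "interchangeable n ((a, l) # map (\<lambda>i. (i, C1)) (z # zs))
                            ((z, C1) # (a, l) # map (\<lambda>i. (i, C1)) zs)"
      using interchangeable_append[OF interchangeable_swap, where p="[]"] by simp
    also have "interchangeable n \<dots> ((z, C1) # map (\<lambda>i. (i, C1)) (insort a zs))"
      using interchangeable_append[OF Cons.IH, of "[(z, C1)]" "[]"] by simp
    finally show ?thesis using False by simp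
  qed
qed

lemma interchangeable_sort: "interchangeable n xs (map (\<lambda>i. (i, C1)) (sort (map fst xs)))"
proof (induction xs)
  case Nil
  then show ?case by (simp add: interchangeable_refl)
next
  case (Cons p xs)
  obtain a l where p: "p = (a, l)" by fastforce
  have "interchangeable n ((a, l) # xs) ((a, l) # map (\<lambda>i. (i, C1)) (sort (map fst xs)))"
    using interchangeable_append[OF Cons.IH, of "[(a, l)]" "[]"] by simp
  also have "interchangeable n \<dots> (map (\<lambda>i. (i, C1)) (sort (map fst ((a, l) # xs))))"
    by (simp add: interchangeable_insort)
  finally show ?case using p by simp
qed

theorem equivclp_move_canonical_order:
  assumes w: "w \<in> labelled_orders n"
  shows "equivclp (move n) w (canonical_order n)"
proof -
  have "mset [0..<Suc n] = mset (map fst w)"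
    using w unfolding labelled_orders_def
    by (subst set_eq_iff_mset_eq_distinct[symmetric]) (auto simp: atLeastLessThanSuc_atLeastAtMost)
  then have "sort (map fst w) = [0..<Suc n]"
    by (metis properties_for_sort sorted_upt)
  then have "interchangeable n w (canonical_order n)"
    using interchangeable_sort[of n w] unfolding canonical_order_def by simp
  then show ?thesis
    using w unfolding interchangeable_def by (metis append_Nil append_Nil2)
qed

lemma finite_UNIV_c2: "finite (UNIV :: c2 set)"
proof -
  have "(UNIV :: c2 set) = {C1, Ct}"
    using c2.exhaust by auto
  then show ?thesis by (metis finite.emptyI finite.insertI)
qed

lemma IF_hom_eq: "IF_hom n m = {F. length F = Suc m \<and> concat F \<in> labelled_orders n}"
  by (simp add: IF_hom_def labelled_orders_def)

lemma finite_IF_hom: "finite (IF_hom n m)"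
proof -
  let ?fibres = "{S :: lset. set S \<subseteq> {0..n} \<times> UNIV \<and> length S \<le> Suc n}"
  have "finite ?fibres"
    by (rule finite_lists_length_le) (simp add: finite_UNIV_c2)
  moreover have "IF_hom n m \<subseteq> {F. set F \<subseteq> ?fibres \<and> length F \<le> Suc m}"
  proof
    fix F assume F: "F \<in> IF_hom n m"
    then have "length (concat F) = Suc n" and elems: "fst ` set (concat F) = {0..n}"
      unfolding IF_hom_def by (auto dest!: distinct_card)
    then have "S \<in> ?fibres" if "S \<in> set F" for S
      using that elems length_concat[of F] member_le_sum_list[of "length S" "map length F"] by force
    then show "F \<in> {F. set F \<subseteq> ?fibres \<and> length F \<le> Suc m}"
      using F unfolding IF_hom_def by auto
  qed
  ultimately show ?thesis
    using finite_lists_length_le finite_subset by blast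
qed

lemma IF_hom_0_eq: "IF_hom n 0 = (\<lambda>w. [w]) ` labelled_orders n"
  unfolding IF_hom_eq by (auto simp: length_Suc_conv)

lemma IF_hom_2_eq: "IF_hom n 2 = {[A, B, C] | A B C. A @ B @ C \<in> labelled_orders n}"
  unfolding IF_hom_eq numeral_2_eq_2 by (auto simp: length_Suc_conv)

lemma mu_eq_canonical_order: "mu n = [canonical_order n]"
  by (simp add: mu_def canonical_order_def)

lemma IF_comp_mu_2: "IF_comp (mu 2) [A, B, C] = [A @ B @ C]"
  by (simp add: IF_comp_def mu_def eval_nat_numeral)

lemma IF_comp_nu: "IF_comp nu [A, B, C] = [C @ twist B @ A]"
  by (simp add: IF_comp_def nu_def)

lemma move_iff_IF_comp:
  "move n w w' \<longleftrightarrow> (\<exists>g \<in> IF_hom n 2. IF_comp (mu 2) g = [w] \<and> IF_comp nu g = [w'])"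
proof
  assume "move n w w'"
  then obtain A B C where "A @ B @ C \<in> labelled_orders n" "w = A @ B @ C" "w' = C @ twist B @ A"
    unfolding move_def by blast
  then show "\<exists>g \<in> IF_hom n 2. IF_comp (mu 2) g = [w] \<and> IF_comp nu g = [w']"
    by (intro bexI[of _ "[A, B, C]"]) (auto simp: IF_hom_2_eq IF_comp_mu_2 IF_comp_nu)
next
  assume "\<exists>g \<in> IF_hom n 2. IF_comp (mu 2) g = [w] \<and> IF_comp nu g = [w']"
  then obtain A B C where "A @ B @ C \<in> labelled_orders n" "w = A @ B @ C" "w' = C @ twist B @ A"
    unfolding IF_hom_2_eq by (auto simp: IF_comp_mu_2 IF_comp_nu)
  then show "move n w w'"
    unfolding move_def by blast
qed

lemma IF_comp_in_IF_hom_0: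
  assumes "g \<in> IF_hom n 2"
  shows "IF_comp (mu 2) g \<in> IF_hom n 0" "IF_comp nu g \<in> IF_hom n 0"
proof -
  obtain A B C where g: "g = [A, B, C]" and ABC: "A @ B @ C \<in> labelled_orders n"
    using assms unfolding IF_hom_2_eq by blast
  moreover have "C @ twist B @ A \<in> labelled_orders n"
    by (rule labelled_orders_mset_cong[OF ABC]) auto
  ultimately show "IF_comp (mu 2) g \<in> IF_hom n 0" "IF_comp nu g \<in> IF_hom n 0"
    by (auto simp: IF_hom_0_eq IF_comp_mu_2 IF_comp_nu)
qed

lemma free_mod_zero: "(\<lambda>_. 0) \<in> free_mod S"
  unfolding free_mod_def by simp

lemma free_mod_add:
  assumes "a \<in> free_mod S" "b \<in> free_mod S"
  shows "(\<lambda>x. a x + b x) \<in> free_mod S"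
proof -
  have "{x. a x + b x \<noteq> 0} \<subseteq> {x. a x \<noteq> 0} \<union> {x. b x \<noteq> 0}"
    by auto
  then show ?thesis
    using assms unfolding free_mod_def by (auto intro: finite_subset)
qed

lemma free_mod_scale:
  assumes "a \<in> free_mod S"
  shows "(\<lambda>x. c * a x) \<in> free_mod S"
proof -
  have "{x. c * a x \<noteq> 0} \<subseteq> {x. a x \<noteq> 0}"
    by auto
  then show ?thesis
    using assms unfolding free_mod_def by (auto intro: finite_subset)
qed

lemma gen_in_free_mod: "a \<in> S \<Longrightarrow> gen a \<in> free_mod S"
  unfolding free_mod_def gen_def by auto

lemma sum_gen_mult:
  "finite S \<Longrightarrow> (\<Sum>x\<in>S. gen a x * f x) = (if a \<in> S then f a else (0 :: 'k::comm_ring_1))"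
  unfolding gen_def by (simp add: if_distrib[of "\<lambda>c. c * _"] cong: if_cong)

lemma sum_mult_gen:
  "finite S \<Longrightarrow> (\<Sum>x\<in>S. f x * gen x b) = (if b \<in> S then f b else (0 :: 'k::comm_ring_1))"
  unfolding gen_def by (simp add: if_distrib[of "\<lambda>c. _ * c"] cong: if_cong)

lemma rho_map_add: "rho_map n (\<lambda>g. a g + b g) = (\<lambda>h. rho_map n a h + rho_map n b h)"
  unfolding rho_map_def by (simp add: distrib_right sum.distrib)

lemma rho_map_scale: "rho_map n (\<lambda>g. c * a g) = (\<lambda>h. c * rho_map n a h)"
  unfolding rho_map_def by (simp add: sum_distrib_left mult.assoc)

lemma rho_map_gen:
  assumes "g \<in> IF_hom n 2"
  shows "rho_map n (gen g) = (gen (IF_comp (mu 2) g) - gen (IF_comp nu g) :: ifmor \<Rightarrow> 'k::comm_ring_1)"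
  unfolding rho_map_def using assms by (simp add: sum_gen_mult finite_IF_hom fun_diff_def)

definition rho_image :: "nat \<Rightarrow> (ifmor \<Rightarrow> 'k::comm_ring_1) set" where
  "rho_image n = rho_map n ` free_mod (IF_hom n 2)"

lemma zero_in_rho_image: "(\<lambda>_. 0) \<in> rho_image n"
proof -
  have "rho_map n (\<lambda>_. 0) = (\<lambda>_. 0)"
    by (simp add: rho_map_def)
  then show ?thesis
    unfolding rho_image_def using free_mod_zero by (rule image_eqI[OF sym])
qed

lemma add_in_rho_image:
  assumes "a \<in> rho_image n" "b \<in> rho_image n"
  shows "(\<lambda>h. a h + b h) \<in> rho_image n"
proof -
  obtain ya yb where "ya \<in> free_mod (IF_hom n 2)" "a = rho_map n ya"
    and "yb \<in> free_mod (IF_hom n 2)" "b = rho_map n yb"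
    using assms unfolding rho_image_def by blast
  then show ?thesis
    unfolding rho_image_def by (auto simp: rho_map_add[symmetric] intro: free_mod_add)
qed

lemma scale_in_rho_image:
  assumes "a \<in> rho_image n"
  shows "(\<lambda>h. c * a h) \<in> rho_image n"
proof -
  obtain y where "y \<in> free_mod (IF_hom n 2)" "a = rho_map n y"
    using assms unfolding rho_image_def by blast
  then show ?thesis
    unfolding rho_image_def by (auto simp: rho_map_scale[symmetric] intro: free_mod_scale)
qed

lemma sum_in_rho_image:
  "finite S \<Longrightarrow> (\<And>s. s \<in> S \<Longrightarrow> f s \<in> rho_image n) \<Longrightarrow> (\<lambda>h. \<Sum>s\<in>S. f s h) \<in> rho_image n"
proof (induction S rule: finite_induct)
  case empty
  then show ?case using zero_in_rho_image by simp
next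
  case (insert s S)
  then show ?case using add_in_rho_image[of "f s" n "\<lambda>h. \<Sum>s\<in>S. f s h"] by simp
qed

lemma move_gen_diff_in_rho_image:
  assumes "move n w w'"
  shows "(gen [w] - gen [w'] :: ifmor \<Rightarrow> 'k::comm_ring_1) \<in> rho_image n"
proof -
  obtain g where "g \<in> IF_hom n 2" "IF_comp (mu 2) g = [w]" "IF_comp nu g = [w']"
    using assms unfolding move_iff_IF_comp by blast
  then have "rho_map n (gen g) = gen [w] - gen [w']"
    by (simp add: rho_map_gen)
  then show ?thesis
    unfolding rho_image_def using gen_in_free_mod[OF \<open>g \<in> IF_hom n 2\<close>]
    by (rule image_eqI[OF sym])
qed

lemma equivclp_move_gen_diff_in_rho_image:
  assumes "equivclp (move n) w w'"
  shows "(gen [w] - gen [w'] :: ifmor \<Rightarrow> 'k::comm_ring_1) \<in> rho_image n"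
  using assms
proof (induction rule: equivclp_induct)
  case base
  then show ?case using zero_in_rho_image by (simp add: fun_diff_def)
next
  case (step y z)
  have "(gen [y] - gen [z] :: ifmor \<Rightarrow> 'k) \<in> rho_image n"
    using step(2)
  proof
    assume "move n z y"
    then show ?thesis
      using scale_in_rho_image[OF move_gen_diff_in_rho_image, of n z y "-1"]
      by (simp add: fun_diff_def)
  qed (rule move_gen_diff_in_rho_image)
  then have "(\<lambda>h. (gen [w] - gen [y]) h + (gen [y] - gen [z]) h :: 'k) \<in> rho_image n"
    by (rule add_in_rho_image[OF step(3)])
  moreover have "(\<lambda>h. (gen [w] - gen [y]) h + (gen [y] - gen [z]) h :: 'k) = gen [w] - gen [z]"
    by (simp add: fun_eq_iff)
  ultimately show ?case
    by simp
qed

lemma mu_in_IF_hom_0: "mu n \<in> IF_hom n 0"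
  by (simp add: mu_eq_canonical_order IF_hom_0_eq canonical_order_in_labelled_orders)

lemma eps_map_surj: "eps_map n ` (free_mod (IF_hom n 0) :: (ifmor \<Rightarrow> 'k::comm_ring_1) set) = UNIV"
proof -
  have "eps_map n (\<lambda>f. c * gen (mu n) f) = c" for c :: 'k
    using mu_in_IF_hom_0
    by (simp add: eps_map_def sum_distrib_left[symmetric] sum_gen_mult[where f = "\<lambda>_. 1", simplified]
        finite_IF_hom)
  then show ?thesis
    using free_mod_scale[OF gen_in_free_mod[OF mu_in_IF_hom_0]] by (metis UNIV_eq_I image_eqI)
qed

lemma rho_map_in_free_mod: "rho_map n y \<in> free_mod (IF_hom n 0)"
proof -
  have vanish: "rho_map n y h = 0" if "h \<notin> IF_hom n 0" for h
    unfolding rho_map_def using that IF_comp_in_IF_hom_0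
    by (intro sum.neutral) (auto simp: gen_def)
  then have "{h. rho_map n y h \<noteq> 0} \<subseteq> IF_hom n 0"
    by blast
  then show ?thesis
    unfolding free_mod_def using vanish finite_IF_hom finite_subset by blast
qed

lemma eps_map_rho_map: "eps_map n (rho_map n y) = 0"
proof -
  have "eps_map n (rho_map n y) = (\<Sum>g\<in>IF_hom n 2. \<Sum>h\<in>IF_hom n 0.
          y g * (gen (IF_comp (mu 2) g) h - gen (IF_comp nu g) h))"
    unfolding eps_map_def rho_map_def by (simp add: sum.swap[of _ "IF_hom n 0"])
  also have "\<dots> = (\<Sum>g\<in>IF_hom n 2. y g * ((\<Sum>h\<in>IF_hom n 0. gen (IF_comp (mu 2) g) h)
          - (\<Sum>h\<in>IF_hom n 0. gen (IF_comp nu g) h)))"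
    by (simp add: sum_distrib_left sum_subtractf right_diff_distrib)
  also have "\<dots> = 0"
    by (intro sum.neutral ballI)
      (simp add: sum_gen_mult[where f = "\<lambda>_. 1", simplified] finite_IF_hom IF_comp_in_IF_hom_0)
  finally show ?thesis .
qed

lemma ker_eps_map_subset_rho_image:
  fixes x :: "ifmor \<Rightarrow> 'k::comm_ring_1"
  assumes x: "x \<in> free_mod (IF_hom n 0)" and eps: "eps_map n x = 0"
  shows "x \<in> rho_image n"
proof -
  have "(\<lambda>b. x h * (gen h b - gen (mu n) b)) \<in> rho_image n" if h: "h \<in> IF_hom n 0" for h
  proof -
    obtain w where "h = [w]" "w \<in> labelled_orders n"
      using h unfolding IF_hom_0_eq by blast
    then have "(gen h - gen (mu n) :: ifmor \<Rightarrow> 'k) \<in> rho_image n"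
      by (simp add: mu_eq_canonical_order equivclp_move_gen_diff_in_rho_image
          equivclp_move_canonical_order)
    then show ?thesis
      using scale_in_rho_image[of _ n "x h"] by (simp add: fun_diff_def)
  qed
  then have "(\<lambda>b. \<Sum>h\<in>IF_hom n 0. x h * (gen h b - gen (mu n) b)) \<in> rho_image n"
    by (rule sum_in_rho_image[OF finite_IF_hom])
  moreover have "(\<Sum>h\<in>IF_hom n 0. x h * (gen h b - gen (mu n) b)) = x b" for b
  proof -
    have "(\<Sum>h\<in>IF_hom n 0. x h * (gen h b - gen (mu n) b))
        = (\<Sum>h\<in>IF_hom n 0. x h * gen h b) - (\<Sum>h\<in>IF_hom n 0. x h) * gen (mu n) b"
      by (simp add: right_diff_distrib sum_subtractf sum_distrib_right)
    also have "\<dots> = x b"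
      using x eps by (simp add: sum_mult_gen finite_IF_hom free_mod_def eps_map_def)
    finally show ?thesis .
  qed
  ultimately show ?thesis
    by simp
qed

theorem lemma5p3:
  fixes n :: nat
  shows "eps_map n ` (free_mod (IF_hom n 0) :: (ifmor \<Rightarrow> 'k::comm_ring_1) set) = UNIV
       \<and> {x \<in> (free_mod (IF_hom n 0) :: (ifmor \<Rightarrow> 'k::comm_ring_1) set). eps_map n x = 0}
           = rho_map n ` (free_mod (IF_hom n 2) :: (ifmor \<Rightarrow> 'k) set)"
proof
  show "eps_map n ` (free_mod (IF_hom n 0) :: (ifmor \<Rightarrow> 'k) set) = UNIV"
    by (rule eps_map_surj)
  show "{x \<in> (free_mod (IF_hom n 0) :: (ifmor \<Rightarrow> 'k) set). eps_map n x = 0}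
          = rho_map n ` (free_mod (IF_hom n 2) :: (ifmor \<Rightarrow> 'k) set)"
    using ker_eps_map_subset_rho_image rho_map_in_free_mod eps_map_rho_map
    unfolding rho_image_def by blast
qed

end
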